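(* Consider the weighted-bins process with unit-weight balls and an $(\alpha,\beta)$-biased distribution $\mathcal D$ with $\alpha,\beta>1$, and let $0<\epsilon\le\frac{2\ln\left(\frac{\alpha\beta-1}{\alpha\beta-\beta}\right)}{\ln\left(\frac{\alpha\beta-1}{\alpha-1}\right)}-1$. Then for every $t\ge0$, $\mathrm{Gap}_{1+\epsilon}(t)$ stochastically dominates $\mathrm{Gap}(t)$, i.e., $\Pr[\mathrm{Gap}_{1+\epsilon}(t)\le b]\le\Pr[\mathrm{Gap}(t)\le b]$ for all real $b$.
   Context: Weighted balls into weighted bins: $n$ bins with positive integer weights $N_1,\dots,N_n$, $N=\sum_iN_i$; $\mathcal D$ on $[n]$ is $(\alpha,\beta)$-biased: $\frac{N_i}{\alpha N}\le\Pr_{\mathcal D}[i]\le\frac{\beta N_i}{N}$. Each round, two bins are sampled independently from $\mathcal D$ and a unit-weight ball is placed in the sampled bin with smaller value $v_i(t-1)=w_i(t-1)/N_i$ ($w_i(t)$ = number of balls in bin $i$ after round $t$); $\mathrm{Gap}(t)=\max_iv_i(t)-\min_jv_j(t)$. The $(1+\epsilon)$-choice process with $N$ bins: unit-weight balls are thrown into $N$ unit-size bins; at each step, with the bins sorted by load in nonincreasing order, the ball is placed into one of the $i$ most loaded bins with probability $\phi_i=(i/N)^{1+\epsilon}$ (so the $i$-th most loaded bin receives it with probability $\phi_i-\phi_{i-1}$, $\phi_0=0$). $\mathrm{Gap}_{1+\epsilon}(t)$ is the difference between the maximum and minimum bin load of this process after $t$ steps (both processes start empty). *)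

theory Defs
  imports "HOL-Probability.Probability_Mass_Function"
begin

text \<open>Bins are indexed by 0..<n; Nw i is the (positive integer) weight of bin i;
  a state w gives the number of balls in each bin.\<close>

definition val :: "(nat \<Rightarrow> nat) \<Rightarrow> (nat \<Rightarrow> nat) \<Rightarrow> nat \<Rightarrow> real" where
  "val Nw w i = real (w i) / real (Nw i)"

definition wgap :: "nat \<Rightarrow> (nat \<Rightarrow> nat) \<Rightarrow> (nat \<Rightarrow> nat) \<Rightarrow> real" where
  "wgap n Nw w = Max (val Nw w ` {..<n}) - Min (val Nw w ` {..<n})"

definition valid_sel :: "(nat \<Rightarrow> nat) \<Rightarrow> ((nat \<Rightarrow> nat) \<Rightarrow> nat \<Rightarrow> nat \<Rightarrow> nat) \<Rightarrow> bool" where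
  "valid_sel Nw sel \<longleftrightarrow> (\<forall>w i j. sel w i j \<in> {i, j} \<and>
      (val Nw w i < val Nw w j \<longrightarrow> sel w i j = i) \<and>
      (val Nw w j < val Nw w i \<longrightarrow> sel w i j = j))"

definition wstep :: "nat pmf \<Rightarrow> ((nat \<Rightarrow> nat) \<Rightarrow> nat \<Rightarrow> nat \<Rightarrow> nat) \<Rightarrow> (nat \<Rightarrow> nat) \<Rightarrow> (nat \<Rightarrow> nat) pmf" where
  "wstep D sel w = bind_pmf D (\<lambda>i. bind_pmf D (\<lambda>j.
      (let k = sel w i j in return_pmf (w(k := Suc (w k))))))"

primrec wproc :: "nat pmf \<Rightarrow> ((nat \<Rightarrow> nat) \<Rightarrow> nat \<Rightarrow> nat \<Rightarrow> nat) \<Rightarrow> nat \<Rightarrow> (nat \<Rightarrow> nat) pmf" where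
  "wproc D sel 0 = return_pmf (\<lambda>_. 0)"
| "wproc D sel (Suc t) = bind_pmf (wproc D sel t) (wstep D sel)"

definition biased :: "nat \<Rightarrow> (nat \<Rightarrow> nat) \<Rightarrow> real \<Rightarrow> real \<Rightarrow> nat pmf \<Rightarrow> bool" where
  "biased n Nw \<alpha> \<beta> D \<longleftrightarrow> set_pmf D \<subseteq> {..<n} \<and>
     (\<forall>i<n. real (Nw i) / (\<alpha> * real (\<Sum>j<n. Nw j)) \<le> pmf D i \<and>
            pmf D i \<le> \<beta> * real (Nw i) / real (\<Sum>j<n. Nw j))"

definition phi :: "nat \<Rightarrow> real \<Rightarrow> nat \<Rightarrow> real" where
  "phi N eps i = (real i / real N) powr (1 + eps)"

text \<open>Rank k (0-based, i.e. the (k+1)-th most loaded bin) is chosen with probability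
  phi (k+1) - phi k.\<close>

definition rank_pmf :: "nat \<Rightarrow> real \<Rightarrow> nat pmf" where
  "rank_pmf N eps = embed_pmf (\<lambda>k. if k < N then phi N eps (Suc k) - phi N eps k else 0)"

definition sorted_bins :: "nat \<Rightarrow> (nat \<Rightarrow> nat) \<Rightarrow> nat list" where
  "sorted_bins N x = sort_key (\<lambda>i. - int (x i)) [0..<N]"

definition estep :: "nat \<Rightarrow> real \<Rightarrow> (nat \<Rightarrow> nat) \<Rightarrow> (nat \<Rightarrow> nat) pmf" where
  "estep N eps x = map_pmf (\<lambda>k. let b = sorted_bins N x ! k in x(b := Suc (x b))) (rank_pmf N eps)"

primrec eproc :: "nat \<Rightarrow> real \<Rightarrow> nat \<Rightarrow> (nat \<Rightarrow> nat) pmf" where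
  "eproc N eps 0 = return_pmf (\<lambda>_. 0)"
| "eproc N eps (Suc t) = bind_pmf (eproc N eps t) (estep N eps)"

definition egap :: "nat \<Rightarrow> (nat \<Rightarrow> nat) \<Rightarrow> real" where
  "egap N x = real (Max (x ` {..<N})) - real (Min (x ` {..<N}))"

end

theory Submission
  imports Defs "HOL-Probability.Product_PMF"
begin

text \<open>A state is compared through its profile P c = (SUM i. max 0 (w i - c * N i)), the number
  of balls lying above normalised height c; the (1 + eps)-process on N unit bins has profiles of
  the same kind, and a smaller profile means a more balanced state. One step of the
  (1 + eps)-process raises the profile at all heights up to a random level whose tail
  probabilities are phi of the layer sizes of the profile. One step of the weighted process raises
  it up to the level of the receiving bin; that level is high only if both sampled bins are high,
  so its tails are at most the squared D-mass of the high bins, which the bias constraints and the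
  choice of eps bound by the same phi. Since the (1 + eps)-step acts monotonically on profiles,
  induction on t shows that every monotone functional of the profile has smaller expectation under
  the weighted process. The event "gap at most b" is sandwiched between two events saying that the
  profile admits a gap certificate, and that is such a monotone functional.\<close>

section \<open>Expectations over finite pmfs\<close>

lemma expectation_mono_finite_pmf:
  fixes f g :: "'a \<Rightarrow> real"
  assumes "finite (set_pmf p)" "\<And>x. x \<in> set_pmf p \<Longrightarrow> f x \<le> g x"
  shows "measure_pmf.expectation p f \<le> measure_pmf.expectation p g"
  using assms by (intro integral_mono_AE integrable_measure_pmf_finite) (auto simp: AE_measure_pmf_iff)

lemma expectation_bind_pmf_finite:
  fixes h :: "'b \<Rightarrow> real"
  assumes fin: "finite (set_pmf p)" "\<And>x. x \<in> set_pmf p \<Longrightarrow> finite (set_pmf (K x))"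
  shows "measure_pmf.expectation (bind_pmf p K) h
    = measure_pmf.expectation p (\<lambda>x. measure_pmf.expectation (K x) h)"
proof -
  have "measure_pmf.expectation (bind_pmf p K) h
      = (\<Sum>x\<in>set_pmf p. pmf p x * measure_pmf.expectation (K x) h)"
    using pmf_expectation_bind[where A="set_pmf p" and p=p and f=K and h=h] fin by simp
  also have "\<dots> = measure_pmf.expectation p (\<lambda>x. measure_pmf.expectation (K x) h)"
    by (subst integral_measure_pmf_real[OF fin(1)]) (auto simp: mult.commute)
  finally show ?thesis .
qed

lemma expectation_not_indicator:
  "measure_pmf.expectation p (\<lambda>x. if C x then 0 else 1 :: real) = 1 - measure_pmf.prob p {x. C x}"
proof -
  have "(\<lambda>x. if C x then 0 else 1 :: real) = indicator (- {x. C x})"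
    by (auto simp: indicator_def)
  then show ?thesis using measure_pmf.prob_compl[of "{x. C x}" p] by (simp add: Compl_eq_Diff_UNIV)
qed

lemma expectation_eq_tail_sum:
  fixes p :: "nat pmf" and F :: "nat \<Rightarrow> real"
  assumes supp: "set_pmf p \<subseteq> {..U}"
  shows "measure_pmf.expectation p F
    = F 0 + (\<Sum>m<U. (F (Suc m) - F m) * measure_pmf.prob p {Suc m..})"
proof -
  let ?ge = "\<lambda>m z. if Suc m \<le> z then 1 else 0 :: real"
  have telescope: "F z = F 0 + (\<Sum>m<U. (F (Suc m) - F m) * ?ge m z)" if "z \<le> U" for z
  proof -
    have "(\<Sum>m<U. (F (Suc m) - F m) * ?ge m z) = (\<Sum>m\<in>{m\<in>{..<U}. Suc m \<le> z}. F (Suc m) - F m)"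
      by (subst sum.inter_filter) (auto intro: sum.cong)
    also have "{m\<in>{..<U}. Suc m \<le> z} = {..<z}" using that by auto
    finally show ?thesis by (simp add: sum_lessThan_telescope)
  qed
  have tail: "measure_pmf.prob p {Suc m..} = (\<Sum>z\<le>U. pmf p z * ?ge m z)" for m
  proof -
    have "{Suc m..} \<inter> set_pmf p = ({Suc m..} \<inter> {..U}) \<inter> set_pmf p" using supp by auto
    then have "measure_pmf.prob p {Suc m..} = measure_pmf.prob p ({Suc m..} \<inter> {..U})"
      by (metis measure_Int_set_pmf)
    also have "\<dots> = (\<Sum>z\<in>{z\<in>{..U}. Suc m \<le> z}. pmf p z)"
      by (subst measure_measure_pmf_finite) (auto intro: sum.cong)
    also have "\<dots> = (\<Sum>z\<le>U. pmf p z * ?ge m z)"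
      by (subst sum.inter_filter) (auto intro: sum.cong)
    finally show ?thesis .
  qed
  have "measure_pmf.expectation p F = (\<Sum>z\<le>U. F z * pmf p z)"
    using supp by (intro integral_measure_pmf_real) auto
  also have "\<dots> = (\<Sum>z\<le>U. pmf p z * (F 0 + (\<Sum>m<U. (F (Suc m) - F m) * ?ge m z)))"
  proof (rule sum.cong[OF refl])
    fix z assume "z \<in> {..U}"
    then have "F z = F 0 + (\<Sum>m<U. (F (Suc m) - F m) * ?ge m z)" by (intro telescope) simp
    then show "F z * pmf p z = pmf p z * (F 0 + (\<Sum>m<U. (F (Suc m) - F m) * ?ge m z))"
      by (simp only: mult.commute)
  qed
  also have "\<dots> = F 0 * (\<Sum>z\<le>U. pmf p z)
      + (\<Sum>m<U. (F (Suc m) - F m) * (\<Sum>z\<le>U. pmf p z * ?ge m z))"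
    by (simp add: algebra_simps sum.distrib sum_distrib_left sum_distrib_right sum.swap[of _ "{..U}"])
  also have "(\<Sum>z\<le>U. pmf p z) = 1" using supp by (intro sum_pmf_eq_1) auto
  finally show ?thesis by (simp add: tail)
qed

lemma expectation_le_of_tail_le:
  fixes p q :: "nat pmf" and F :: "nat \<Rightarrow> real"
  assumes "mono F" "set_pmf p \<subseteq> {..U}" "set_pmf q \<subseteq> {..U}"
    and "\<And>m. measure_pmf.prob p {Suc m..} \<le> measure_pmf.prob q {Suc m..}"
  shows "measure_pmf.expectation p F \<le> measure_pmf.expectation q F"
  unfolding expectation_eq_tail_sum[OF assms(2)] expectation_eq_tail_sum[OF assms(3)]
  using assms(1,4) by (intro add_left_mono sum_mono mult_left_mono) (auto simp: mono_def)

section \<open>An inequality for biased distributions\<close>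

lemma powr_concave:
  fixes g l x y :: real
  assumes g: "0 < g" "g \<le> 1" and xy: "0 < x" "0 < y" and l: "0 \<le> l" "l \<le> 1"
  shows "(1 - l) * x powr g + l * y powr g \<le> ((1 - l) * x + l * y) powr g"
proof -
  let ?z = "(1 - l) * x powr g + l * y powr g"
  have "convex_on {0<..} (\<lambda>t. t powr (1 / g))"
    using g by (intro powr_convex) (simp add: field_simps)
  then have "?z powr (1 / g) \<le> (1 - l) * (x powr g) powr (1 / g) + l * (y powr g) powr (1 / g)"
    using convex_onD[of "{0<..}" _ l "x powr g" "y powr g"] xy l by simp
  also have "\<dots> = (1 - l) * x + l * y" using g xy by (simp add: powr_powr)
  finally have z: "?z powr (1 / g) \<le> (1 - l) * x + l * y" .
  have "0 \<le> ?z" using l by simp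
  then have "?z = (?z powr (1 / g)) powr g" using g by (simp add: powr_powr)
  also have "\<dots> \<le> ((1 - l) * x + l * y) powr g" using z g by (intro powr_mono2) auto
  finally show ?thesis .
qed

text \<open>The bound on eps says exactly that the two constraints on the mass of a biased
  distribution, which meet at mass s, stay below x powr ((1 + eps) / 2) there.\<close>

lemma biased_threshold:
  fixes a b e :: real
  defines "s \<equiv> (a - 1) / (a * b - 1)"
  assumes a: "a > 1" and b: "b > 1"
    and e: "e \<le> 2 * ln ((a * b - 1) / (a * b - b)) / ln ((a * b - 1) / (a - 1)) - 1"
  shows "0 < s" "s < 1" "(1 + e) / 2 < 1" "b * s \<le> s powr ((1 + e) / 2)"
proof -
  define L where "L = ln ((a * b - 1) / (a - 1))"
  have ab: "a - 1 < a * b - 1" using a b by simp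
  have ab1: "0 < a * b - 1" using a ab by linarith
  then have "(a * b - 1) / (a - 1) > 1" using a b by simp
  then have L: "L > 0" unfolding L_def by simp
  have "ln ((a * b - 1) / (a * b - b)) = ln (((a * b - 1) / (a - 1)) / b)"
    using a b ab1 by (simp add: field_simps)
  also have "\<dots> = L - ln b" unfolding L_def using a b ab1 by (subst ln_div) auto
  finally have "e \<le> 2 * (L - ln b) / L - 1" using e unfolding L_def by simp
  then have key: "e * L \<le> L - 2 * ln b" using L by (simp add: field_simps)
  show s: "0 < s" "s < 1" unfolding s_def using a ab ab1 by (auto simp: divide_less_eq)
  have "e * L < 1 * L" using key ln_gt_zero[OF b] by linarith
  then show "(1 + e) / 2 < 1" using L mult_less_cancel_right_pos by fastforce
  have "ln s = - L" unfolding s_def L_def using a ab1 by (simp add: ln_div)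
  then have "ln (b * s) = ln b - L" using b s by (simp add: ln_mult)
  also have "\<dots> \<le> (1 + e) / 2 * ln s" using key \<open>ln s = - L\<close> by (simp add: field_simps)
  also have "\<dots> = ln (s powr ((1 + e) / 2))" using s by simp
  finally show "b * s \<le> s powr ((1 + e) / 2)" using b s by (subst (asm) ln_le_cancel_iff) auto
qed

lemma le_powr_of_biased_mass:
  fixes a b e x p :: real
  assumes a: "a > 1" and b: "b > 1" and e: "0 < e"
    and e': "e \<le> 2 * ln ((a * b - 1) / (a * b - b)) / ln ((a * b - 1) / (a - 1)) - 1"
    and x: "0 \<le> x" "x \<le> 1" and p: "p \<le> b * x" "p \<le> 1 - (1 - x) / a"
  shows "p \<le> x powr ((1 + e) / 2)"
proof -
  define g where "g = (1 + e) / 2"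
  define s where "s = (a - 1) / (a * b - 1)"
  have g: "0 < g" "g \<le> 1" using biased_threshold(3)[OF a b e'] e unfolding g_def by auto
  have s: "0 < s" "s < 1" "b * s \<le> s powr g"
    using biased_threshold[OF a b e'] unfolding s_def g_def by auto
  show ?thesis
  proof (cases "x \<le> s")
    case True
    show ?thesis
    proof (cases "x = 0")
      case False
      then have x0: "x > 0" using x by simp
      have "b = b * s / s" using s by simp
      also have "\<dots> \<le> s powr g / s" using s by (intro divide_right_mono) auto
      also have "\<dots> = s powr (g - 1)" using s by (simp add: powr_diff)
      also have "\<dots> \<le> x powr (g - 1)" using g x0 True by (intro powr_mono2') auto
      finally have "b * x \<le> x powr (g - 1) * x" using x0 by simp
      also have "\<dots> = x powr g" using x0 by (simp add: powr_mult_base mult.commute)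
      finally show ?thesis using p unfolding g_def by simp
    qed (use p in simp)
  next
    case False
    define l where "l = (x - s) / (1 - s)"
    have l: "0 \<le> l" "l \<le> 1" unfolding l_def using False s x by (auto simp: field_simps)
    have "l * (1 - s) = x - s" unfolding l_def using s by simp
    then have l3: "x = (1 - l) * s + l * 1" by (simp add: algebra_simps)
    have "a * b - 1 > 0" using a b by (simp add: less_1_mult)
    then have bs: "(a - 1 + s) / a = b * s" unfolding s_def using a by (simp add: field_simps)
    have "p \<le> (1 - l) * ((a - 1 + s) / a) + l"
      using p(2) a l3 by (simp add: field_simps)
    also have "\<dots> = (1 - l) * (b * s) + l" by (simp only: bs)
    also have "\<dots> \<le> (1 - l) * s powr g + l * 1 powr g"
      using s l by (simp add: mult_left_mono)
    also have "\<dots> \<le> x powr g" unfolding l3 using powr_concave[OF g s(1) zero_less_one l(1,2)] by simp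
    finally show ?thesis unfolding g_def .
  qed
qed

section \<open>Profiles\<close>

definition profile :: "nat \<Rightarrow> (nat \<Rightarrow> nat) \<Rightarrow> (nat \<Rightarrow> nat) \<Rightarrow> int \<Rightarrow> int" where
  "profile n Nw w c = (\<Sum>i<n. max 0 (int (w i) - c * int (Nw i)))"

definition layer :: "(int \<Rightarrow> int) \<Rightarrow> int \<Rightarrow> int" where
  "layer P c = P (c - 1) - P c"

definition bin_layer :: "int \<Rightarrow> int \<Rightarrow> int \<Rightarrow> int" where
  "bin_layer a N c = max 0 (a - (c - 1) * N) - max 0 (a - c * N)"

lemma bin_layer_alt: "bin_layer a N c = max 0 (a - c * N + N) - max 0 (a - c * N)"
  unfolding bin_layer_def by (simp add: algebra_simps)

lemma bin_layer_full: "c * N \<le> a \<Longrightarrow> 0 \<le> N \<Longrightarrow> bin_layer a N c = N"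
  unfolding bin_layer_alt by auto

lemma bin_layer_bounds: "0 \<le> N \<Longrightarrow> 0 \<le> bin_layer a N c \<and> bin_layer a N c \<le> N"
  unfolding bin_layer_alt by auto

lemma bin_layer_empty:
  assumes "a \<le> (c - 1) * N" "0 \<le> N" shows "bin_layer a N c = 0"
  using assms unfolding bin_layer_alt by (auto simp: algebra_simps)

lemma bin_layer_antimono:
  assumes "c \<le> c'" "0 \<le> N" shows "bin_layer a N c' \<le> bin_layer a N c"
proof -
  have "c * N \<le> c' * N" using assms by (simp add: mult_right_mono)
  then show ?thesis using assms(2) unfolding bin_layer_alt by (auto simp: max_def)
qed

lemma layer_profile: "layer (profile n Nw w) c = (\<Sum>i<n. bin_layer (int (w i)) (int (Nw i)) c)"
  unfolding layer_def profile_def bin_layer_def by (simp add: sum_subtractf)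

lemma layer_profile_antimono: "c \<le> c' \<Longrightarrow> layer (profile n Nw w) c' \<le> layer (profile n Nw w) c"
  unfolding layer_profile by (intro sum_mono bin_layer_antimono) auto

lemma layer_profile_bounds:
  "0 \<le> layer (profile n Nw w) c \<and> layer (profile n Nw w) c \<le> int (\<Sum>i<n. Nw i)"
  unfolding layer_profile using bin_layer_bounds
  by (auto intro: sum_nonneg order.trans[OF sum_mono[of _ _ "\<lambda>i. int (Nw i)"]])

lemma layer_profile_nonpos: "c \<le> 0 \<Longrightarrow> layer (profile n Nw w) c = int (\<Sum>i<n. Nw i)"
proof -
  assume "c \<le> 0"
  then have "bin_layer (int (w i)) (int (Nw i)) c = int (Nw i)" for i
    by (intro bin_layer_full) (auto intro: order.trans[OF mult_nonpos_nonneg])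
  then show ?thesis unfolding layer_profile by simp
qed

lemma layer_profile_eq_0:
  assumes "\<And>i. i < n \<Longrightarrow> Nw i > 0" "int (\<Sum>i<n. w i) < c"
  shows "layer (profile n Nw w) c = 0"
proof -
  have "bin_layer (int (w i)) (int (Nw i)) c = 0" if i: "i < n" for i
  proof (rule bin_layer_empty)
    have "w i \<le> (\<Sum>i<n. w i)" using i by (intro member_le_sum) auto
    then have wc: "int (w i) \<le> c - 1" using assms(2) by linarith
    also have "\<dots> \<le> (c - 1) * int (Nw i)"
      using assms(1)[OF i] wc by (simp add: mult_le_cancel_left1)
    finally show "int (w i) \<le> (c - 1) * int (Nw i)" .
  qed simp
  then show ?thesis unfolding layer_profile by simp
qed

lemma weight_le_layer_profile:
  "int (\<Sum>i\<in>{i. i < n \<and> c * int (Nw i) \<le> int (w i)}. Nw i) \<le> layer (profile n Nw w) c"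
proof -
  let ?H = "{i. i < n \<and> c * int (Nw i) \<le> int (w i)}"
  have "int (\<Sum>i\<in>?H. Nw i) = (\<Sum>i\<in>?H. bin_layer (int (w i)) (int (Nw i)) c)"
    by (simp add: bin_layer_full)
  also have "\<dots> \<le> (\<Sum>i<n. bin_layer (int (w i)) (int (Nw i)) c)"
    by (rule sum_mono2) (auto simp: bin_layer_bounds)
  finally show ?thesis unfolding layer_profile .
qed

lemma profile_empty: "profile n Nw (\<lambda>_. 0) = (\<lambda>c. int (\<Sum>i<n. Nw i) * max 0 (- c))"
proof
  fix c :: int
  have "max 0 (0 - c * int (Nw i)) = int (Nw i) * max 0 (- c)" for i
    by (cases "c \<le> 0") (auto simp: max_def mult_nonpos_nonneg mult_le_0_iff)
  then show "profile n Nw (\<lambda>_. 0) c = int (\<Sum>i<n. Nw i) * max 0 (- c)"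
    unfolding profile_def by (simp add: sum_distrib_right)
qed

lemma sum_add_ball:
  fixes w :: "nat \<Rightarrow> nat"
  assumes k: "k < n" shows "(\<Sum>i<n. (w(k := Suc (w k))) i) = Suc (\<Sum>i<n. w i)"
proof -
  let ?w' = "w(k := Suc (w k))"
  have "(\<Sum>i<n. ?w' i) = ?w' k + (\<Sum>i\<in>{..<n} - {k}. ?w' i)"
    using k by (intro sum.remove) auto
  also have "(\<Sum>i\<in>{..<n} - {k}. ?w' i) = (\<Sum>i\<in>{..<n} - {k}. w i)"
    by (intro sum.cong) auto
  also have "?w' k + (\<Sum>i\<in>{..<n} - {k}. w i) = Suc (w k + (\<Sum>i\<in>{..<n} - {k}. w i))"
    by simp
  also have "w k + (\<Sum>i\<in>{..<n} - {k}. w i) = (\<Sum>i<n. w i)"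
    using k by (intro sum.remove[symmetric]) auto
  finally show ?thesis .
qed

lemma profile_add_ball:
  assumes "k < n"
  shows "profile n Nw (w(k := Suc (w k))) c
    = profile n Nw w c + (if c * int (Nw k) \<le> int (w k) then 1 else 0)"
proof -
  have "profile n Nw (w(k := Suc (w k))) c = profile n Nw w c +
      (max 0 (int (w k) + 1 - c * int (Nw k)) - max 0 (int (w k) - c * int (Nw k)))"
    using assms unfolding profile_def by (simp add: sum.remove[of "{..<n}" k] algebra_simps)
  then show ?thesis by auto
qed

definition level :: "(nat \<Rightarrow> nat) \<Rightarrow> (nat \<Rightarrow> nat) \<Rightarrow> nat \<Rightarrow> nat" where
  "level Nw w i = w i div Nw i"

definition add_level :: "(int \<Rightarrow> int) \<Rightarrow> nat \<Rightarrow> int \<Rightarrow> int" where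
  "add_level P m c = P c + (if c \<le> int m then 1 else 0)"

text \<open>Among unit bins, the one of rank k (0-based, by decreasing load) has load at least c
  iff more than k bins do, i.e. iff layer P c > k; so add_rank P k is the profile after a
  ball is added to that bin.\<close>

definition add_rank :: "(int \<Rightarrow> int) \<Rightarrow> nat \<Rightarrow> int \<Rightarrow> int" where
  "add_rank P k c = P c + (if int k + 1 \<le> layer P c then 1 else 0)"

lemma le_level_iff:
  assumes "0 < Nw i" shows "c \<le> int (level Nw w i) \<longleftrightarrow> c * int (Nw i) \<le> int (w i)"
proof (cases "c < 0")
  case True
  then have "c * int (Nw i) \<le> 0" by (simp add: mult_nonpos_nonneg)
  then show ?thesis using True by simp
next
  case False
  then obtain m where "c = int m" using zero_le_imp_eq_int[of c] by auto
  with assms show ?thesis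
    unfolding level_def by (simp add: less_eq_div_iff_mult_less_eq flip: of_nat_mult)
qed

lemma profile_add_ball_level:
  assumes "k < n" "0 < Nw k"
  shows "profile n Nw (w(k := Suc (w k))) = add_level (profile n Nw w) (level Nw w k)"
  using profile_add_ball[OF assms(1)] le_level_iff[of Nw k _ w, OF assms(2)] unfolding add_level_def by auto

lemma floor_val: "\<lfloor>val Nw w i\<rfloor> = int (level Nw w i)"
  unfolding val_def level_def by (rule floor_divide_of_nat_eq)

lemma level_mono_val: "val Nw w a \<le> val Nw w b \<Longrightarrow> level Nw w a \<le> level Nw w b"
  using floor_mono[of "val Nw w a" "val Nw w b"] by (simp add: floor_val)

lemma sel_mem: "valid_sel Nw sel \<Longrightarrow> sel w i j \<in> {i, j}"
  unfolding valid_sel_def by blast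

lemma val_sel_le:
  assumes "valid_sel Nw sel"
  shows "val Nw w (sel w i j) \<le> val Nw w i \<and> val Nw w (sel w i j) \<le> val Nw w j"
proof -
  have sel: "sel w i j = i \<or> sel w i j = j" "val Nw w i < val Nw w j \<Longrightarrow> sel w i j = i"
    "val Nw w j < val Nw w i \<Longrightarrow> sel w i j = j"
    using assms unfolding valid_sel_def by blast+
  from sel(1) show ?thesis
  proof
    assume "sel w i j = i"
    then show ?thesis using sel(3) by (cases "val Nw w j < val Nw w i") auto
  next
    assume "sel w i j = j"
    then show ?thesis using sel(2) by (cases "val Nw w i < val Nw w j") auto
  qed
qed

lemma level_sel_le:
  "valid_sel Nw sel \<Longrightarrow> level Nw w (sel w i j) \<le> level Nw w i \<and> level Nw w (sel w i j) \<le> level Nw w j"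
  using val_sel_le level_mono_val by blast

lemma add_level_mono: "m \<le> m' \<Longrightarrow> add_level P m \<le> add_level P m'"
  unfolding add_level_def le_fun_def by auto

text \<open>If the rank-k bin is raised at height c for P but not for Q, then layer P c > layer Q c,
  which together with P (c - 1) \<le> Q (c - 1) forces P c < Q c.\<close>

lemma add_rank_mono: "P \<le> Q \<Longrightarrow> add_rank P k \<le> add_rank Q k"
proof (unfold le_fun_def, intro allI)
  fix c assume PQ: "\<forall>c. P c \<le> Q c"
  then have "P (c - 1) \<le> Q (c - 1)" "P c \<le> Q c" by auto
  then show "add_rank P k c \<le> add_rank Q k c" unfolding add_rank_def layer_def by auto
qed

lemma layer_iff_of_add_rank_eq:
  assumes "add_rank P k = add_level P m"
  shows "int k + 1 \<le> layer P c \<longleftrightarrow> c \<le> int m"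
  using fun_cong[OF assms, of c] unfolding add_rank_def add_level_def by (auto split: if_splits)

lemma exists_rank_level:
  assumes Npos: "\<And>i. i < n \<Longrightarrow> 0 < Nw i" and k: "k < (\<Sum>i<n. Nw i)"
  shows "\<exists>m \<le> (\<Sum>i<n. w i). add_rank (profile n Nw w) k = add_level (profile n Nw w) m"
proof -
  let ?P = "profile n Nw w"
  define S where "S = {m. m \<le> (\<Sum>i<n. w i) \<and> int k + 1 \<le> layer ?P (int m)}"
  have fin: "finite S" unfolding S_def by simp
  have "int k + 1 \<le> int (\<Sum>i<n. Nw i)" using k by linarith
  then have "0 \<in> S" unfolding S_def using layer_profile_nonpos[of 0 n Nw w] by simp
  then have m: "Max S \<in> S" using Max_in[OF fin] by auto
  have iff: "int k + 1 \<le> layer ?P c \<longleftrightarrow> c \<le> int (Max S)" for c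
  proof
    assume c: "int k + 1 \<le> layer ?P c"
    show "c \<le> int (Max S)"
    proof (cases "c < 0")
      case False
      have "\<not> int (\<Sum>i<n. w i) < c"
      proof
        assume "int (\<Sum>i<n. w i) < c"
        then have "layer ?P c = 0" using Npos by (intro layer_profile_eq_0)
        then show False using c by simp
      qed
      then have "nat c \<le> (\<Sum>i<n. w i)" by (simp add: nat_le_iff not_less del: of_nat_sum)
      then have "nat c \<in> S" unfolding S_def using c False by auto
      then have "nat c \<le> Max S" using fin by simp
      then show ?thesis by linarith
    qed simp
  next
    assume "c \<le> int (Max S)"
    then show "int k + 1 \<le> layer ?P c"
      using m layer_profile_antimono[of c "int (Max S)" n Nw w] unfolding S_def by simp
  qed
  have "add_rank ?P k = add_level ?P (Max S)"
    unfolding add_rank_def add_level_def iff ..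
  then show ?thesis using m unfolding S_def by blast
qed

section \<open>The (1 + eps)-choice process\<close>

lemma sorted_bins_basic:
  "length (sorted_bins N x) = N" "distinct (sorted_bins N x)" "set (sorted_bins N x) = {..<N}"
  "sorted (map (\<lambda>i. - int (x i)) (sorted_bins N x))"
  unfolding sorted_bins_def by auto

lemma sorted_bins_nth_less: "k < N \<Longrightarrow> sorted_bins N x ! k < N"
  using sorted_bins_basic(1,3)[where N=N and x=x] nth_mem by (metis lessThan_iff)

lemma load_sorted_bins_antimono:
  assumes "i \<le> j" "j < N" shows "x (sorted_bins N x ! j) \<le> x (sorted_bins N x ! i)"
proof -
  have "map (\<lambda>i. - int (x i)) (sorted_bins N x) ! i \<le> map (\<lambda>i. - int (x i)) (sorted_bins N x) ! j"
    using sorted_bins_basic(1,4)[where N=N and x=x] assms by (auto simp: sorted_iff_nth_mono)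
  then show ?thesis using assms sorted_bins_basic(1)[where N=N and x=x] by simp
qed

lemma card_gt_of_le_load_sorted_bins:
  assumes k: "k < N" and c: "c \<le> int (x (sorted_bins N x ! k))"
  shows "k < card {j. j < N \<and> c \<le> int (x j)}"
proof -
  let ?L = "sorted_bins N x" and ?A = "{j. j < N \<and> c \<le> int (x j)}"
  have "(!) ?L ` {..k} \<subseteq> ?A"
  proof
    fix j assume "j \<in> (!) ?L ` {..k}"
    then obtain i where i: "i \<le> k" "j = ?L ! i" by auto
    have "x (?L ! k) \<le> x (?L ! i)" using load_sorted_bins_antimono[OF i(1) k] .
    then show "j \<in> ?A" using i c sorted_bins_nth_less[of i N x] k by auto
  qed
  moreover have "card ((!) ?L ` {..k}) = Suc k"
    using sorted_bins_basic(1,2)[where N=N and x=x] k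
    by (subst card_image) (auto simp: inj_on_def nth_eq_iff_index_eq)
  ultimately show ?thesis using card_mono[of ?A "(!) ?L ` {..k}"] by simp
qed

lemma le_load_sorted_bins_of_card_gt:
  assumes k: "k < N" and card: "k < card {j. j < N \<and> c \<le> int (x j)}"
  shows "c \<le> int (x (sorted_bins N x ! k))"
proof (rule ccontr)
  let ?L = "sorted_bins N x" and ?A = "{j. j < N \<and> c \<le> int (x j)}"
  assume c: "\<not> c \<le> int (x (?L ! k))"
  have "?A \<subseteq> (!) ?L ` {..<k}"
  proof
    fix j assume j: "j \<in> ?A"
    then have "j \<in> set ?L" using sorted_bins_basic(3)[where N=N and x=x] by auto
    then obtain i where i: "i < N" "j = ?L ! i"
      using sorted_bins_basic(1)[where N=N and x=x] by (metis in_set_conv_nth)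
    have "i < k"
    proof (rule ccontr)
      assume "\<not> i < k"
      then have "x (?L ! i) \<le> x (?L ! k)" using load_sorted_bins_antimono[of k i N x] i by auto
      then show False using c j i by auto
    qed
    then show "j \<in> (!) ?L ` {..<k}" using i by auto
  qed
  then have "card ?A \<le> card ((!) ?L ` {..<k})" by (intro card_mono) auto
  also have "\<dots> \<le> k" using card_image_le[of "{..<k}"] by simp
  finally show False using card by simp
qed

lemma le_load_sorted_bins_iff:
  "k < N \<Longrightarrow> c \<le> int (x (sorted_bins N x ! k)) \<longleftrightarrow> k < card {j. j < N \<and> c \<le> int (x j)}"
  using card_gt_of_le_load_sorted_bins le_load_sorted_bins_of_card_gt by blast

lemma layer_unit_profile: "layer (profile N (\<lambda>_. 1) x) c = int (card {j. j < N \<and> c \<le> int (x j)})"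
proof -
  have "layer (profile N (\<lambda>_. 1) x) c = (\<Sum>j<N. if c \<le> int (x j) then 1 else 0)"
    unfolding layer_profile bin_layer_def by (intro sum.cong) auto
  also have "\<dots> = int (card {j. j < N \<and> c \<le> int (x j)})"
    by (simp add: sum.If_cases Int_def conj_commute)
  finally show ?thesis .
qed

lemma unit_profile_add_sorted_bin:
  assumes "k < N"
  shows "profile N (\<lambda>_. 1) (let b = sorted_bins N x ! k in x(b := Suc (x b)))
    = add_rank (profile N (\<lambda>_. 1) x) k"
  using profile_add_ball[OF sorted_bins_nth_less[OF assms], of "\<lambda>_. 1" x]
    le_load_sorted_bins_iff[OF assms, of _ x]
  unfolding add_rank_def layer_unit_profile Let_def by auto

lemma phi_0: "phi N eps 0 = 0"
  by (simp add: phi_def)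

lemma phi_self: "N > 0 \<Longrightarrow> phi N eps N = 1"
  by (simp add: phi_def)

lemma phi_mono: "i \<le> j \<Longrightarrow> eps > 0 \<Longrightarrow> phi N eps i \<le> phi N eps j"
  unfolding phi_def by (intro powr_mono2) (auto intro: divide_right_mono)

definition rank_step :: "nat \<Rightarrow> real \<Rightarrow> ((int \<Rightarrow> int) \<Rightarrow> real) \<Rightarrow> (int \<Rightarrow> int) \<Rightarrow> real" where
  "rank_step N eps f P = measure_pmf.expectation (rank_pmf N eps) (\<lambda>k. f (add_rank P k))"

context
  fixes N :: nat and eps :: real
  assumes N: "N > 0" and eps: "eps > 0"
begin

lemma pmf_rank_pmf:
  "pmf (rank_pmf N eps) k = (if k < N then phi N eps (Suc k) - phi N eps k else 0)"
proof -
  let ?f = "\<lambda>k. if k < N then phi N eps (Suc k) - phi N eps k else 0"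
  have nonneg: "0 \<le> ?f k" for k using phi_mono[OF _ eps] by auto
  have "(\<integral>\<^sup>+k. ennreal (?f k) \<partial>count_space UNIV) = (\<Sum>k<N. ennreal (?f k))"
    by (rule nn_integral_count_space') auto
  also have "\<dots> = ennreal (\<Sum>k<N. ?f k)"
    by (subst sum_ennreal) (auto intro: phi_mono[OF _ eps])
  also have "(\<Sum>k<N. ?f k) = (\<Sum>k<N. phi N eps (Suc k) - phi N eps k)"
    by simp
  also have "(\<Sum>k<N. phi N eps (Suc k) - phi N eps k) = 1"
    by (subst sum_lessThan_telescope) (simp add: phi_0 phi_self N)
  finally show ?thesis unfolding rank_pmf_def using nonneg by (subst pmf_embed_pmf) auto
qed

lemma set_pmf_rank_pmf: "set_pmf (rank_pmf N eps) \<subseteq> {..<N}"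
  using pmf_rank_pmf by (auto simp: set_pmf_eq)

lemma prob_rank_pmf_lessThan: "K \<le> N \<Longrightarrow> measure_pmf.prob (rank_pmf N eps) {..<K} = phi N eps K"
  by (simp add: measure_measure_pmf_finite pmf_rank_pmf sum_lessThan_telescope phi_0)

lemma rank_step_eq_sum: "rank_step N eps f P = (\<Sum>k<N. f (add_rank P k) * pmf (rank_pmf N eps) k)"
  unfolding rank_step_def using set_pmf_rank_pmf by (intro integral_measure_pmf_real) auto

lemma mono_rank_step: "mono f \<Longrightarrow> mono (rank_step N eps f)"
  unfolding rank_step_eq_sum
  by (intro monoI sum_mono mult_right_mono) (auto dest: monoD intro: add_rank_mono)

lemma expectation_estep:
  "measure_pmf.expectation (estep N eps x) (\<lambda>y. f (profile N (\<lambda>_. 1) y))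
    = rank_step N eps f (profile N (\<lambda>_. 1) x)"
proof -
  have "map_pmf (profile N (\<lambda>_. 1)) (estep N eps x)
      = map_pmf (add_rank (profile N (\<lambda>_. 1) x)) (rank_pmf N eps)"
    unfolding estep_def map_pmf_comp
    using set_pmf_rank_pmf unit_profile_add_sorted_bin by (intro map_pmf_cong) auto
  then show ?thesis
    unfolding rank_step_def by (metis integral_map_pmf)
qed

lemma finite_set_pmf_estep: "finite (set_pmf (estep N eps x))"
  unfolding estep_def set_map_pmf by (intro finite_imageI finite_subset[OF set_pmf_rank_pmf]) simp

lemma finite_set_pmf_eproc: "finite (set_pmf (eproc N eps t))"
  by (induction t) (simp_all add: finite_set_pmf_estep)

lemma sum_eproc: "x \<in> set_pmf (eproc N eps t) \<Longrightarrow> (\<Sum>j<N. x j) = t"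
proof (induction t arbitrary: x)
  case (Suc t)
  then obtain y k where y: "y \<in> set_pmf (eproc N eps t)" "k \<in> set_pmf (rank_pmf N eps)"
    and x: "x = (let b = sorted_bins N y ! k in y(b := Suc (y b)))"
    by (auto simp: estep_def)
  have "k < N" using y(2) set_pmf_rank_pmf by auto
  then show ?case
    unfolding x Let_def using sum_add_ball[OF sorted_bins_nth_less] Suc.IH[OF y(1)] by simp
qed simp

end

lemma exists_rank_levels:
  assumes "\<And>i. i < n \<Longrightarrow> 0 < Nw i"
  shows "\<exists>\<mu>. \<forall>k\<in>{..<\<Sum>i<n. Nw i}.
    \<mu> k \<le> (\<Sum>i<n. w i) \<and> add_rank (profile n Nw w) k = add_level (profile n Nw w) (\<mu> k)"
proof -
  have "\<forall>k\<in>{..<\<Sum>i<n. Nw i}. \<exists>m.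
      m \<le> (\<Sum>i<n. w i) \<and> add_rank (profile n Nw w) k = add_level (profile n Nw w) m"
    using exists_rank_level[where n=n and Nw=Nw and w=w, OF assms] by blast
  then show ?thesis by (rule bchoice)
qed

text \<open>The rank-k bin receives the ball at the largest height with layer at least k + 1, so a
  (1 + eps)-step also adds a ball at a random level, whose tails are values of phi.\<close>

lemma rank_step_as_level_expectation:
  assumes Npos: "\<And>i. i < n \<Longrightarrow> 0 < Nw i" and N: "0 < (\<Sum>i<n. Nw i)" and eps: "0 < eps"
  obtains q where "set_pmf q \<subseteq> {..\<Sum>i<n. w i}"
    and "\<And>m. measure_pmf.prob q {Suc m..}
           = phi (\<Sum>i<n. Nw i) eps (nat (layer (profile n Nw w) (int (Suc m))))"
    and "\<And>f. rank_step (\<Sum>i<n. Nw i) eps f (profile n Nw w)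
           = measure_pmf.expectation q (\<lambda>m. f (add_level (profile n Nw w) m))"
proof -
  let ?N = "\<Sum>i<n. Nw i" and ?P = "profile n Nw w" and ?rank = "rank_pmf (\<Sum>i<n. Nw i) eps"
  have supp: "set_pmf ?rank \<subseteq> {..<?N}" using set_pmf_rank_pmf[OF N eps] .
  from exists_rank_levels[OF Npos] obtain \<mu>
    where \<mu>: "\<forall>k\<in>{..<?N}. \<mu> k \<le> (\<Sum>i<n. w i) \<and> add_rank ?P k = add_level ?P (\<mu> k)" ..
  have \<mu>_le: "\<mu> k \<le> (\<Sum>i<n. w i)" and \<mu>_eq: "add_rank ?P k = add_level ?P (\<mu> k)"
    if "k < ?N" for k
    using \<mu> that by simp_all
  show ?thesis
  proof
    show "set_pmf (map_pmf \<mu> ?rank) \<subseteq> {..\<Sum>i<n. w i}" using supp \<mu>_le by fastforce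
  next
    fix m
    define K where "K = nat (layer ?P (int (Suc m)))"
    have "K \<le> ?N" unfolding K_def using layer_profile_bounds[of n Nw w] by (simp add: nat_le_iff)
    have "Suc m \<le> \<mu> k \<longleftrightarrow> k < K" if "k < ?N" for k
    proof -
      have "Suc m \<le> \<mu> k \<longleftrightarrow> int k + 1 \<le> layer ?P (int (Suc m))"
        using layer_iff_of_add_rank_eq[OF \<mu>_eq[OF that], of "int (Suc m)"] by (simp only: of_nat_le_iff)
      also have "\<dots> \<longleftrightarrow> k < K"
        unfolding K_def using layer_profile_bounds[of n Nw w "int (Suc m)"] by linarith
      finally show ?thesis .
    qed
    then have "{k. Suc m \<le> \<mu> k} \<inter> set_pmf ?rank = {..<K} \<inter> set_pmf ?rank"
      using supp by auto
    then have "measure_pmf.prob ?rank {k. Suc m \<le> \<mu> k} = measure_pmf.prob ?rank {..<K}"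
      by (metis measure_Int_set_pmf)
    then show "measure_pmf.prob (map_pmf \<mu> ?rank) {Suc m..} = phi ?N eps K"
      using prob_rank_pmf_lessThan[OF N eps \<open>K \<le> ?N\<close>] by (simp add: vimage_def)
  next
    fix f :: "(int \<Rightarrow> int) \<Rightarrow> real"
    have "map_pmf (add_rank ?P) ?rank = map_pmf (add_level ?P) (map_pmf \<mu> ?rank)"
      unfolding map_pmf_comp using supp \<mu>_eq by (intro map_pmf_cong) auto
    then show "rank_step ?N eps f ?P = measure_pmf.expectation (map_pmf \<mu> ?rank) (\<lambda>m. f (add_level ?P m))"
      unfolding rank_step_def by (metis integral_map_pmf)
  qed
qed

section \<open>The weighted process\<close>

lemma wstep_eq_map_pair_pmf:
  "wstep D sel w = map_pmf (\<lambda>(i, j). let k = sel w i j in w(k := Suc (w k))) (pair_pmf D D)"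
  by (simp add: wstep_def pair_pmf_def map_bind_pmf Let_def)

locale biased_two_choice =
  fixes n :: nat and Nw :: "nat \<Rightarrow> nat" and D :: "nat pmf"
    and \<alpha> \<beta> \<epsilon> :: real and sel :: "(nat \<Rightarrow> nat) \<Rightarrow> nat \<Rightarrow> nat \<Rightarrow> nat"
  assumes n_pos: "n \<ge> 1"
    and Nw_pos: "\<And>i. i < n \<Longrightarrow> Nw i > 0"
    and alpha_gt_1: "\<alpha> > 1" and beta_gt_1: "\<beta> > 1"
    and biased: "biased n Nw \<alpha> \<beta> D"
    and valid_sel: "valid_sel Nw sel"
    and eps_pos: "0 < \<epsilon>"
    and eps_le: "\<epsilon> \<le> 2 * ln ((\<alpha> * \<beta> - 1) / (\<alpha> * \<beta> - \<beta>)) / ln ((\<alpha> * \<beta> - 1) / (\<alpha> - 1)) - 1"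
begin

abbreviation N_total :: nat where
  "N_total \<equiv> \<Sum>i<n. Nw i"

lemma N_total_pos: "N_total > 0"
  using n_pos Nw_pos[of 0] member_le_sum[of 0 "{..<n}" Nw] by simp

lemma set_pmf_D: "set_pmf D \<subseteq> {..<n}"
  using biased unfolding biased_def by simp

lemma sel_less: "i \<in> set_pmf D \<Longrightarrow> j \<in> set_pmf D \<Longrightarrow> sel w i j < n"
  using sel_mem[OF valid_sel, of w i j] set_pmf_D by auto

lemma prob_D_le_mass:
  assumes H: "H \<subseteq> {..<n}"
  shows "measure_pmf.prob D H \<le> \<beta> * (real (\<Sum>i\<in>H. Nw i) / real N_total)"
proof -
  have "measure_pmf.prob D H = (\<Sum>i\<in>H. pmf D i)"
    using H by (intro measure_measure_pmf_finite) (auto intro: finite_subset)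
  also have "\<dots> \<le> (\<Sum>i\<in>H. \<beta> * real (Nw i) / real N_total)"
    using H biased unfolding biased_def by (intro sum_mono) auto
  also have "\<dots> = \<beta> * (real (\<Sum>i\<in>H. Nw i) / real N_total)"
    by (simp add: sum_divide_distrib sum_distrib_left)
  finally show ?thesis .
qed

lemma prob_D_le_compl_mass:
  assumes H: "H \<subseteq> {..<n}"
  shows "measure_pmf.prob D H \<le> 1 - (1 - real (\<Sum>i\<in>H. Nw i) / real N_total) / \<alpha>"
proof -
  have N: "real N_total > 0" using N_total_pos by (simp only: of_nat_0_less_iff)
  have split: "real N_total = real (\<Sum>i\<in>H. Nw i) + real (\<Sum>i\<in>{..<n} - H. Nw i)"
    using H by (metis finite_lessThan sum.subset_diff add.commute of_nat_add)
  have "(1 - real (\<Sum>i\<in>H. Nw i) / real N_total) / \<alpha>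
      = (\<Sum>i\<in>{..<n} - H. real (Nw i) / (\<alpha> * real N_total))"
    using N split alpha_gt_1 by (simp add: sum_divide_distrib[symmetric] field_simps)
  also have "\<dots> \<le> (\<Sum>i\<in>{..<n} - H. pmf D i)"
    using biased unfolding biased_def by (intro sum_mono) auto
  also have "\<dots> = 1 - measure_pmf.prob D H"
  proof -
    have "(\<Sum>i<n. pmf D i) = 1" by (rule sum_pmf_eq_1[OF finite_lessThan set_pmf_D])
    moreover have "(\<Sum>i<n. pmf D i) = (\<Sum>i\<in>{..<n} - H. pmf D i) + (\<Sum>i\<in>H. pmf D i)"
      using sum.subset_diff[OF H finite_lessThan] .
    moreover have "measure_pmf.prob D H = (\<Sum>i\<in>H. pmf D i)"
      using H by (intro measure_measure_pmf_finite) (auto intro: finite_subset)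
    ultimately show ?thesis by linarith
  qed
  finally show ?thesis by simp
qed

lemma prob_D_le_powr:
  assumes H: "H \<subseteq> {..<n}"
  shows "measure_pmf.prob D H \<le> (real (\<Sum>i\<in>H. Nw i) / real N_total) powr ((1 + \<epsilon>) / 2)"
proof -
  let ?x = "real (\<Sum>i\<in>H. Nw i) / real N_total"
  have "(\<Sum>i\<in>H. Nw i) \<le> N_total" using H by (intro sum_mono2) auto
  then have x: "0 \<le> ?x" "?x \<le> 1"
    using N_total_pos by (simp_all del: of_nat_sum)
  show ?thesis
    using le_powr_of_biased_mass[OF alpha_gt_1 beta_gt_1 eps_pos eps_le x
        prob_D_le_mass[OF H] prob_D_le_compl_mass[OF H]] .
qed

lemma finite_set_pmf_wstep: "finite (set_pmf (wstep D sel w))"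
  using set_pmf_D finite_subset unfolding wstep_eq_map_pair_pmf by (simp add: finite_subset)

lemma finite_set_pmf_wproc: "finite (set_pmf (wproc D sel t))"
  by (induction t) (simp_all add: finite_set_pmf_wstep)

lemma sum_wproc: "w \<in> set_pmf (wproc D sel t) \<Longrightarrow> (\<Sum>i<n. w i) = t"
proof (induction t arbitrary: w)
  case (Suc t)
  then obtain y i j where y: "y \<in> set_pmf (wproc D sel t)" "i \<in> set_pmf D" "j \<in> set_pmf D"
    and w: "w = (let k = sel y i j in y(k := Suc (y k)))"
    by (auto simp: wstep_eq_map_pair_pmf)
  then show ?case
    unfolding w Let_def using sum_add_ball[OF sel_less] Suc.IH[OF y(1)] by simp
qed simp

definition level_pmf :: "(nat \<Rightarrow> nat) \<Rightarrow> nat pmf" where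
  "level_pmf w = map_pmf (\<lambda>(i, j). level Nw w (sel w i j)) (pair_pmf D D)"

lemma expectation_wstep:
  fixes f :: "(int \<Rightarrow> int) \<Rightarrow> real"
  shows "measure_pmf.expectation (wstep D sel w) (\<lambda>y. f (profile n Nw y))
    = measure_pmf.expectation (level_pmf w) (\<lambda>m. f (add_level (profile n Nw w) m))"
proof -
  have "profile n Nw (let k = sel w i j in w(k := Suc (w k)))
      = add_level (profile n Nw w) (level Nw w (sel w i j))"
    if "i \<in> set_pmf D" "j \<in> set_pmf D" for i j
    using profile_add_ball_level[where k="sel w i j" and n=n and Nw=Nw and w=w,
        OF sel_less[OF that] Nw_pos[OF sel_less[OF that]]]
    by (simp add: Let_def)
  then have "map_pmf (profile n Nw) (wstep D sel w)
      = map_pmf (add_level (profile n Nw w)) (level_pmf w)"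
    unfolding wstep_eq_map_pair_pmf level_pmf_def map_pmf_comp
    by (intro map_pmf_cong refl) auto
  then have "measure_pmf.expectation (map_pmf (profile n Nw) (wstep D sel w)) f
      = measure_pmf.expectation (map_pmf (add_level (profile n Nw w)) (level_pmf w)) f"
    by (rule arg_cong)
  then show ?thesis by simp
qed

lemma set_pmf_level_pmf: "set_pmf (level_pmf w) \<subseteq> {..\<Sum>i<n. w i}"
proof
  fix m assume "m \<in> set_pmf (level_pmf w)"
  then obtain i j where ij: "i \<in> set_pmf D" "j \<in> set_pmf D" and m: "m = level Nw w (sel w i j)"
    unfolding level_pmf_def by auto
  have "m \<le> w (sel w i j)" unfolding m level_def by simp
  also have "\<dots> \<le> (\<Sum>i<n. w i)" using sel_less[OF ij] by (intro member_le_sum) auto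
  finally show "m \<in> {..\<Sum>i<n. w i}" by simp
qed

text \<open>The ball goes to the sampled bin of smaller value, so it lands at level m + 1 or higher
  only if both sampled bins are already there.\<close>

lemma prob_level_pmf_ge_le:
  "measure_pmf.prob (level_pmf w) {Suc m..}
    \<le> measure_pmf.prob D {i. i < n \<and> Suc m \<le> level Nw w i} ^ 2"
proof -
  let ?H = "{i. i < n \<and> Suc m \<le> level Nw w i}"
  have "measure_pmf.prob (level_pmf w) {Suc m..}
      = measure_pmf.prob (pair_pmf D D) {ij. Suc m \<le> level Nw w (sel w (fst ij) (snd ij))}"
    unfolding level_pmf_def by (simp add: case_prod_beta vimage_def)
  also have "\<dots> \<le> measure_pmf.prob (pair_pmf D D) (?H \<times> ?H)"
  proof (rule measure_pmf.finite_measure_mono_AE)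
    show "AE ij in pair_pmf D D.
        ij \<in> {ij. Suc m \<le> level Nw w (sel w (fst ij) (snd ij))} \<longrightarrow> ij \<in> ?H \<times> ?H"
      using set_pmf_D level_sel_le[OF valid_sel]
      by (auto simp: AE_measure_pmf_iff intro: order.trans)
  qed simp
  also have "\<dots> = measure_pmf.prob D ?H ^ 2"
    by (simp add: measure_pmf_prob_product power2_eq_square)
  finally show ?thesis .
qed

lemma prob_level_pmf_ge:
  "measure_pmf.prob (level_pmf w) {Suc m..}
    \<le> phi N_total \<epsilon> (nat (layer (profile n Nw w) (int (Suc m))))"
proof -
  let ?H = "{i. i < n \<and> Suc m \<le> level Nw w i}"
  let ?x = "real (\<Sum>i\<in>?H. Nw i) / real N_total"
  have "measure_pmf.prob (level_pmf w) {Suc m..} \<le> measure_pmf.prob D ?H ^ 2"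
    by (rule prob_level_pmf_ge_le)
  also have "\<dots> \<le> (?x powr ((1 + \<epsilon>) / 2)) ^ 2"
    using prob_D_le_powr[of ?H] by (intro power_mono) auto
  also have "\<dots> = ?x powr (1 + \<epsilon>)"
    by (simp add: power2_eq_square powr_add[symmetric])
  also have "\<dots> \<le> phi N_total \<epsilon> (nat (layer (profile n Nw w) (int (Suc m))))"
  proof -
    have "?H = {i. i < n \<and> int (Suc m) * int (Nw i) \<le> int (w i)}"
      using le_level_iff[where Nw=Nw and w=w and c="int (Suc m)", OF Nw_pos]
      by (auto simp del: of_nat_Suc)
    then have "int (\<Sum>i\<in>?H. Nw i) \<le> layer (profile n Nw w) (int (Suc m))"
      using weight_le_layer_profile by simp
    then have "(\<Sum>i\<in>?H. Nw i) \<le> nat (layer (profile n Nw w) (int (Suc m)))" by linarith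
    then show ?thesis
      unfolding phi_def using eps_pos
      by (intro powr_mono2 divide_right_mono) (auto simp del: of_nat_sum)
  qed
  finally show ?thesis .
qed

lemma expectation_wstep_le_rank_step:
  assumes "mono f"
  shows "measure_pmf.expectation (wstep D sel w) (\<lambda>y. f (profile n Nw y))
    \<le> rank_step N_total \<epsilon> f (profile n Nw w)"
proof -
  obtain q where q: "set_pmf q \<subseteq> {..\<Sum>i<n. w i}"
    "\<And>m. measure_pmf.prob q {Suc m..} = phi N_total \<epsilon> (nat (layer (profile n Nw w) (int (Suc m))))"
    "rank_step N_total \<epsilon> f (profile n Nw w)
       = measure_pmf.expectation q (\<lambda>m. f (add_level (profile n Nw w) m))"
    using rank_step_as_level_expectation[OF Nw_pos N_total_pos eps_pos] by metis
  have mono: "mono (\<lambda>m. f (add_level (profile n Nw w) m))"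
    by (intro monoI monoD[OF assms] add_level_mono)
  have tail: "measure_pmf.prob (level_pmf w) {Suc m..} \<le> measure_pmf.prob q {Suc m..}" for m
    using prob_level_pmf_ge q(2) by simp
  show ?thesis
    unfolding expectation_wstep q(3)
    using mono set_pmf_level_pmf q(1) tail by (rule expectation_le_of_tail_le)
qed

lemma expectation_wproc_le_eproc:
  fixes f :: "(int \<Rightarrow> int) \<Rightarrow> real"
  assumes "mono f"
  shows "measure_pmf.expectation (wproc D sel t) (\<lambda>w. f (profile n Nw w))
    \<le> measure_pmf.expectation (eproc N_total \<epsilon> t) (\<lambda>x. f (profile N_total (\<lambda>_. 1) x))"
  using assms
proof (induction t arbitrary: f)
  case 0
  then show ?case by (simp add: profile_empty)
next
  case (Suc t)
  have fin_w: "finite (set_pmf (wproc D sel t))" and fin_e: "finite (set_pmf (eproc N_total \<epsilon> t))"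
    using finite_set_pmf_wproc finite_set_pmf_eproc[OF N_total_pos eps_pos] .
  note fin_step = finite_set_pmf_wstep finite_set_pmf_estep[OF N_total_pos eps_pos]
  have "measure_pmf.expectation (wproc D sel (Suc t)) (\<lambda>w. f (profile n Nw w))
      = measure_pmf.expectation (wproc D sel t)
          (\<lambda>w. measure_pmf.expectation (wstep D sel w) (\<lambda>y. f (profile n Nw y)))"
    unfolding wproc.simps by (rule expectation_bind_pmf_finite) (use fin_w fin_step in auto)
  also have "\<dots> \<le> measure_pmf.expectation (wproc D sel t)
      (\<lambda>w. rank_step N_total \<epsilon> f (profile n Nw w))"
    using fin_w expectation_wstep_le_rank_step[OF Suc.prems] by (rule expectation_mono_finite_pmf)
  also have "\<dots> \<le> measure_pmf.expectation (eproc N_total \<epsilon> t)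
      (\<lambda>x. rank_step N_total \<epsilon> f (profile N_total (\<lambda>_. 1) x))"
    using Suc.IH mono_rank_step[OF N_total_pos eps_pos Suc.prems] .
  also have "\<dots> = measure_pmf.expectation (eproc N_total \<epsilon> t)
      (\<lambda>x. measure_pmf.expectation (estep N_total \<epsilon> x) (\<lambda>y. f (profile N_total (\<lambda>_. 1) y)))"
    by (simp only: expectation_estep[OF N_total_pos eps_pos])
  also have "\<dots> = measure_pmf.expectation (eproc N_total \<epsilon> (Suc t))
      (\<lambda>x. f (profile N_total (\<lambda>_. 1) x))"
    unfolding eproc.simps by (rule expectation_bind_pmf_finite[symmetric]) (use fin_e fin_step in auto)
  finally show ?case .
qed

end

section \<open>Gaps\<close>

text \<open>With t balls of total weight N, P hi \<le> 0 forces every value to be at most hi, and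
  P lo \<le> t - N * lo forces every value to be at least lo.\<close>

definition gap_certificate :: "nat \<Rightarrow> nat \<Rightarrow> real \<Rightarrow> (int \<Rightarrow> int) \<Rightarrow> bool" where
  "gap_certificate N t b P \<longleftrightarrow>
     (\<exists>lo hi. real_of_int (hi - lo) \<le> b \<and> P hi \<le> 0 \<and> P lo \<le> int t - int N * lo)"

lemma gap_certificate_antimono:
  "P \<le> Q \<Longrightarrow> gap_certificate N t b Q \<Longrightarrow> gap_certificate N t b P"
  unfolding gap_certificate_def le_fun_def by (meson order.trans)

lemma load_le_of_profile_nonpos:
  assumes "profile n Nw w c \<le> 0" "i < n"
  shows "int (w i) \<le> c * int (Nw i)"
proof -
  have "max 0 (int (w i) - c * int (Nw i)) \<le> profile n Nw w c"
    unfolding profile_def using assms(2) by (intro member_le_sum) auto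
  then show ?thesis using assms(1) max.cobounded2[of 0 "int (w i) - c * int (Nw i)"] by linarith
qed

lemma load_ge_of_profile_le:
  assumes "profile n Nw w c \<le> int (\<Sum>j<n. w j) - int (\<Sum>j<n. Nw j) * c" "i < n"
  shows "c * int (Nw i) \<le> int (w i)"
proof -
  let ?d = "\<lambda>j. int (w j) - c * int (Nw j)"
  have "max 0 (?d i) - ?d i \<le> (\<Sum>j<n. max 0 (?d j) - ?d j)"
    using assms(2) by (intro member_le_sum) auto
  also have "\<dots> = profile n Nw w c - (int (\<Sum>j<n. w j) - int (\<Sum>j<n. Nw j) * c)"
    unfolding profile_def by (simp add: sum_subtractf sum_distrib_left mult.commute)
  finally show ?thesis using assms(1) max.cobounded1[of 0 "?d i"] by linarith
qed

lemma gap_certificate_unit_profile: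
  assumes "N > 0" "(\<Sum>j<N. x j) = t" "egap N x \<le> b"
  shows "gap_certificate N t b (profile N (\<lambda>_. 1) x)"
proof -
  let ?A = "x ` {..<N}"
  define hi where "hi = int (Max ?A)"
  define lo where "lo = int (Min ?A)"
  have le: "x j \<le> Max ?A" "Min ?A \<le> x j" if "j < N" for j using that by auto
  have "profile N (\<lambda>_. 1) x hi = 0"
    unfolding profile_def hi_def by (intro sum.neutral) (auto dest: le)
  moreover have "profile N (\<lambda>_. 1) x lo = int t - int N * lo"
  proof -
    have "profile N (\<lambda>_. 1) x lo = (\<Sum>j<N. int (x j) - lo)"
      unfolding profile_def lo_def by (intro sum.cong) (auto dest: le)
    also have "\<dots> = int t - int N * lo"
      using assms(2) by (simp add: sum_subtractf flip: of_nat_sum)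
    finally show ?thesis .
  qed
  moreover have "real_of_int (hi - lo) \<le> b" using assms(3) unfolding egap_def hi_def lo_def by simp
  ultimately show ?thesis unfolding gap_certificate_def by fastforce
qed

lemma wgap_le_of_gap_certificate:
  assumes n: "n \<ge> 1" and Npos: "\<And>i. i < n \<Longrightarrow> 0 < Nw i" and t: "(\<Sum>i<n. w i) = t"
    and cert: "gap_certificate (\<Sum>i<n. Nw i) t b (profile n Nw w)"
  shows "wgap n Nw w \<le> b"
proof -
  obtain lo hi where gap: "real_of_int (hi - lo) \<le> b" and hi: "profile n Nw w hi \<le> 0"
    and lo: "profile n Nw w lo \<le> int (\<Sum>i<n. w i) - int (\<Sum>i<n. Nw i) * lo"
    using cert t unfolding gap_certificate_def by blast
  have "val Nw w i \<le> real_of_int hi" if i: "i < n" for i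
  proof -
    have "real (w i) \<le> real_of_int hi * real (Nw i)"
      using load_le_of_profile_nonpos[OF hi i] by (metis of_int_of_nat_eq of_int_le_iff of_int_mult)
    then show ?thesis unfolding val_def using Npos[OF i] by (simp add: divide_le_eq)
  qed
  moreover have "real_of_int lo \<le> val Nw w i" if i: "i < n" for i
  proof -
    have "real_of_int lo * real (Nw i) \<le> real (w i)"
      using load_ge_of_profile_le[OF lo i] by (metis of_int_of_nat_eq of_int_le_iff of_int_mult)
    then show ?thesis unfolding val_def using Npos[OF i] by (simp add: le_divide_eq)
  qed
  moreover have "{..<n} \<noteq> {}" using n by (simp add: lessThan_empty_iff)
  ultimately have "Max (val Nw w ` {..<n}) \<le> real_of_int hi" "real_of_int lo \<le> Min (val Nw w ` {..<n})"
    by simp_all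
  then show ?thesis unfolding wgap_def using gap by simp
qed

theorem lemma1:
  fixes n :: nat and Nw :: "nat \<Rightarrow> nat" and D :: "nat pmf"
    and \<alpha> \<beta> \<epsilon> :: real and sel :: "(nat \<Rightarrow> nat) \<Rightarrow> nat \<Rightarrow> nat \<Rightarrow> nat"
  assumes "n \<ge> 1"
    and "\<And>i. i < n \<Longrightarrow> Nw i > 0"
    and "\<alpha> > 1" and "\<beta> > 1"
    and "biased n Nw \<alpha> \<beta> D"
    and "valid_sel Nw sel"
    and "0 < \<epsilon>"
    and "\<epsilon> \<le> 2 * ln ((\<alpha> * \<beta> - 1) / (\<alpha> * \<beta> - \<beta>)) / ln ((\<alpha> * \<beta> - 1) / (\<alpha> - 1)) - 1"
  shows "\<forall>t. \<forall>b::real.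
    measure_pmf.prob (eproc (\<Sum>i<n. Nw i) \<epsilon> t) {x. egap (\<Sum>i<n. Nw i) x \<le> b}
    \<le> measure_pmf.prob (wproc D sel t) {w. wgap n Nw w \<le> b}"
proof (intro allI)
  fix t and b :: real
  interpret biased_two_choice n Nw D \<alpha> \<beta> \<epsilon> sel
    using assms by unfold_locales
  let ?cert = "gap_certificate N_total t b"
  have "mono (\<lambda>P. if ?cert P then 0 else 1 :: real)"
    by (rule monoI) (auto dest: gap_certificate_antimono)
  from expectation_wproc_le_eproc[OF this, of t]
  have "measure_pmf.prob (eproc N_total \<epsilon> t) {x. ?cert (profile N_total (\<lambda>_. 1) x)}
      \<le> measure_pmf.prob (wproc D sel t) {w. ?cert (profile n Nw w)}"
    by (simp add: expectation_not_indicator)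
  moreover have "measure_pmf.prob (eproc N_total \<epsilon> t) {x. egap N_total x \<le> b}
      \<le> measure_pmf.prob (eproc N_total \<epsilon> t) {x. ?cert (profile N_total (\<lambda>_. 1) x)}"
    using gap_certificate_unit_profile[OF N_total_pos sum_eproc[OF N_total_pos eps_pos]]
    by (intro measure_pmf.finite_measure_mono_AE) (auto simp: AE_measure_pmf_iff)
  moreover have "measure_pmf.prob (wproc D sel t) {w. ?cert (profile n Nw w)}
      \<le> measure_pmf.prob (wproc D sel t) {w. wgap n Nw w \<le> b}"
    using wgap_le_of_gap_certificate[OF n_pos Nw_pos sum_wproc]
    by (intro measure_pmf.finite_measure_mono_AE) (auto simp: AE_measure_pmf_iff)
  ultimately show "measure_pmf.prob (eproc N_total \<epsilon> t) {x. egap N_total x \<le> b}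
      \<le> measure_pmf.prob (wproc D sel t) {w. wgap n Nw w \<le> b}"
    by linarith
qed

end
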